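(* Let $G$ be a semisimple compact Lie group and $H$ a closed subgroup, with all notation as in the context. Let $D$ be a self-adjoint unbounded operator with compact resolvent on $\mathcal{H}_\rho$ such that $D e_{(\gamma,i)}=d_\gamma e_{(\gamma,i)}$ for all $\gamma\in\Gamma$, $1\le i\le N_\gamma$ (with $d_\gamma\in\mathbb{R}$), and such that $(\mathcal{O}(G/H),\mathcal{H}_\rho,D)$ is a spectral triple. Assume that there exist a finite set $R\subset\mathcal{O}(G/H)$ and $c>0$ such that the growth graph $\mathcal{G}_R^c$ has a root $\gamma_0$. Then $|d_\gamma|=O(\ell_{\gamma_0}(\gamma))$, i.e. there is a constant $C>0$ with $|d_\gamma|\le C\,\ell_{\gamma_0}(\gamma)$ for all $\gamma\in\Gamma$.
   Context: Let $G$ be a semisimple compact Lie group and $H\subset G$ a closed subgroup. Let $C(G/H)=\{a\in C(G): a(hg)=a(g)\ \forall h\in H,g\in G\}$, with the action $\tau:C(G/H)\to C(G/H)\otimes C(G)$ given by the coproduct, $\tau(a)(x,g)=a(xg)$. This action is ergodic; let $\rho$ be its unique invariant state (the Haar state of $C(G)$ restricted to $C(G/H)$), and $(\mathcal{H}_\rho,\pi_\rho,\eta_\rho)$ the associated GNS representation. Let $\mathcal{O}(G)$ be the span of matrix coefficients of finite-dimensional irreducible unitary representations of $G$ and $\mathcal{O}(G/H)=\{a\in C(G/H):\tau(a)\in C(G/H)\otimes_{alg}\mathcal{O}(G)\}$. Then $\mathcal{O}(G/H)=\bigoplus_{\gamma\in\Gamma}W_\gamma$, where $\Gamma=\{(\lambda,j):\lambda\in\widehat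 G,\ 1\le j\le I_\lambda\}$, $I_\lambda$ is the (finite) multiplicity with which the irreducible representation of highest weight $\lambda$ occurs in $C(G/H)$, and $W_{(\lambda,j)}$ are the corresponding irreducible subspaces (Podleś decomposition). Let $N_\gamma=\dim W_\gamma$, fix for each $\gamma$ a basis $\{a_{(\gamma,i)}:1\le i\le N_\gamma\}$ of $W_\gamma$, and put $e_{(\gamma,i)}=\eta_\rho(a_{(\gamma,i)})\in\mathcal{H}_\rho$; these vectors span a dense subspace and form a basis of $\eta_\rho(\mathcal{O}(G/H))$. Growth graph: for a finite set $R=\{r_1,\dots,r_k\}\subset\mathcal{O}(G/H)$ and $c>0$, $\mathcal{G}_R^c$ is the directed graph with vertex set $\Gamma$ and an edge $\gamma\to\gamma'$ iff for some $j$, $i$, $i'$ one has $\pi_\rho(r_j)e_{(\gamma,i)}=e_{(\gamma',i')}$ and $\|e_{(\gamma,i)}\|/\|e_{(\gamma',i')}\|<c$. A vertex $\gamma_0$ is a root if every $\gamma\in\Gamma$ can be reached from $\gamma_0$ by a directed path. For a root $\gamma_0$, the length function is $\ell_{\gamma_0}(\gamma_0)=1$ and, for $\gamma\neq\gamma_0$, $\ell_{\gamma_0}(\gamma)$ is the length of a shortest directed path from $\gamma_0$ to $\gamma$. A spectral triple $(\mathcal{O}(G/H),\mathcal{H}_\rho,D)$ means: $D$ is self-adjoint with compact resolvent, and for every $a\in\mathcal{O}(G/H)$ the commutator $[D,\pi_\rho(a)]$ is densely defined and extends to a bounded operator. *)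

theory Defs
  imports "HOL-Analysis.Analysis"
begin

text \<open>Complex Hilbert spaces are modelled as real Hilbert spaces (type class
  real_inner + complete_space) equipped with a complex structure J (multiplication
  by the imaginary unit).  The complex inner product is then
  inner x y + i * inner x (J y); a map is complex-linear iff it is real-linear and
  commutes with J.\<close>

definition complex_structure :: "('h::real_inner \<Rightarrow> 'h) \<Rightarrow> bool" where
  "complex_structure J \<longleftrightarrow> linear J \<and> (\<forall>x. J (J x) = - x) \<and>
     (\<forall>x y. inner (J x) (J y) = inner x y)"

definition complex_linear_operator ::
    "('h::real_inner \<Rightarrow> 'h) \<Rightarrow> 'h set \<Rightarrow> ('h \<Rightarrow> 'h) \<Rightarrow> bool" where
  "complex_linear_operator J Dm T \<longleftrightarrow> subspace Dm \<and> J ` Dm \<subseteq> Dm \<and>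
     (\<forall>x\<in>Dm. \<forall>y\<in>Dm. T (x + y) = T x + T y) \<and>
     (\<forall>x\<in>Dm. \<forall>a. T (a *\<^sub>R x) = a *\<^sub>R T x) \<and>
     (\<forall>x\<in>Dm. T (J x) = J (T x))"

text \<open>Self-adjoint: densely defined, symmetric, and the adjoint has the same domain
  (T* \<subseteq> T).  For complex-linear operators, testing with the real part of the complex
  inner product is equivalent to testing with the complex inner product.\<close>
definition self_adjoint_op ::
    "('h::real_inner \<Rightarrow> 'h) \<Rightarrow> 'h set \<Rightarrow> ('h \<Rightarrow> 'h) \<Rightarrow> bool" where
  "self_adjoint_op J Dm T \<longleftrightarrow> complex_linear_operator J Dm T \<and>
     closure Dm = UNIV \<and>
     (\<forall>x\<in>Dm. \<forall>y\<in>Dm. inner (T x) y = inner x (T y)) \<and>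
     (\<forall>y z. (\<forall>x\<in>Dm. inner (T x) y = inner x z) \<longrightarrow> y \<in> Dm \<and> T y = z)"

text \<open>Compact resolvent: the resolvent (T + i)^{-1} exists as a bounded operator
  H \<rightarrow> Dm and is compact (maps the unit ball to a relatively compact set).\<close>
definition compact_resolvent ::
    "('h::real_normed_vector \<Rightarrow> 'h) \<Rightarrow> 'h set \<Rightarrow> ('h \<Rightarrow> 'h) \<Rightarrow> bool" where
  "compact_resolvent J Dm T \<longleftrightarrow> (\<exists>Rv. bounded_linear Rv \<and> (\<forall>x. Rv x \<in> Dm \<and> T (Rv x) + J (Rv x) = x) \<and>
     (\<forall>x\<in>Dm. Rv (T x + J x) = x) \<and> compact (closure (Rv ` ball 0 1)))"

definition bounded_commutator ::
    "'h set \<Rightarrow> ('h::real_normed_vector \<Rightarrow> 'h) \<Rightarrow> ('h \<Rightarrow> 'h) \<Rightarrow> bool" where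
  "bounded_commutator Dm T P \<longleftrightarrow>
     (let cd = {x\<in>Dm. P x \<in> Dm} in closure cd = UNIV \<and>
        (\<exists>B. bounded_linear B \<and> (\<forall>x\<in>cd. B x = T (P x) - P (T x))))"

definition spectral_triple ::
    "('h::{real_inner,complete_space} \<Rightarrow> 'h) \<Rightarrow> 'a set \<Rightarrow> ('a \<Rightarrow> 'h \<Rightarrow> 'h) \<Rightarrow> 'h set \<Rightarrow> ('h \<Rightarrow> 'h) \<Rightarrow> bool" where
  "spectral_triple J A \<pi> Dm T \<longleftrightarrow> self_adjoint_op J Dm T \<and> compact_resolvent J Dm T \<and>
     (\<forall>a\<in>A. bounded_commutator Dm T (\<pi> a))"

definition growth_edges ::
    "'g set \<Rightarrow> ('g \<Rightarrow> nat) \<Rightarrow> ('g \<Rightarrow> nat \<Rightarrow> 'h::real_normed_vector) \<Rightarrow> ('a \<Rightarrow> 'h \<Rightarrow> 'h)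
      \<Rightarrow> 'a set \<Rightarrow> real \<Rightarrow> ('g \<times> 'g) set" where
  "growth_edges \<Gamma> N e \<pi> R c = {(\<gamma>, \<gamma>'). \<gamma> \<in> \<Gamma> \<and> \<gamma>' \<in> \<Gamma> \<and>
     (\<exists>r\<in>R. \<exists>i\<in>{1..N \<gamma>}. \<exists>i'\<in>{1..N \<gamma>'}. \<pi> r (e \<gamma> i) = e \<gamma>' i' \<and>
        norm (e \<gamma> i) / norm (e \<gamma>' i') < c)}"

definition is_root :: "'g set \<Rightarrow> ('g \<times> 'g) set \<Rightarrow> 'g \<Rightarrow> bool" where
  "is_root V E v0 \<longleftrightarrow> v0 \<in> V \<and> (\<forall>v\<in>V. (v0, v) \<in> E\<^sup>*)"

definition path_length :: "('g \<times> 'g) set \<Rightarrow> 'g \<Rightarrow> 'g \<Rightarrow> nat" where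
  "path_length E v0 v = (if v = v0 then 1 else (LEAST n. (v0, v) \<in> E ^^ n))"

end

theory Submission
  imports Defs
begin

text \<open>If \<open>\<pi> r\<close> maps an eigenvector \<open>u\<close> of \<open>D\<close> (eigenvalue \<open>d \<gamma>\<close>) to an eigenvector \<open>v\<close>
  (eigenvalue \<open>d \<gamma>'\<close>), then \<open>[D, \<pi> r] u = (d \<gamma>' - d \<gamma>) v\<close>. Since the commutators of the
  finitely many \<open>r \<in> R\<close> are bounded by a common \<open>K\<close> and \<open>\<parallel>u\<parallel> < c \<parallel>v\<parallel>\<close> along an edge of the
  growth graph, each edge changes \<open>d\<close> by at most \<open>c K\<close>. Summing along a shortest path from
  the root gives \<open>\<bar>d \<gamma>\<bar> \<le> \<bar>d \<gamma>0\<bar> + c K \<ell>(\<gamma>)\<close>, which is linear in \<open>\<ell>(\<gamma>) \<ge> 1\<close>.\<close>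

lemma bounded_commutator_norm_bound:
  assumes "bounded_commutator Dm T P"
  shows "\<exists>K>0. \<forall>x. x \<in> Dm \<longrightarrow> P x \<in> Dm \<longrightarrow> norm (T (P x) - P (T x)) \<le> K * norm x"
proof -
  obtain B where B: "bounded_linear B" "\<And>x. x \<in> Dm \<Longrightarrow> P x \<in> Dm \<Longrightarrow> B x = T (P x) - P (T x)"
    using assms unfolding bounded_commutator_def Let_def by blast
  obtain K where "K > 0" and bound: "\<And>x. norm (B x) \<le> norm x * K"
    using bounded_linear.pos_bounded[OF B(1)] by blast
  then show ?thesis
    using B(2) by (metis mult.commute)
qed

lemma spectral_triple_uniform_commutator_bound:
  assumes "spectral_triple J A \<pi> Dm D" and "finite R" and "R \<subseteq> A"
  shows "\<exists>K\<ge>0. \<forall>r\<in>R. \<forall>x. x \<in> Dm \<longrightarrow> \<pi> r x \<in> Dm \<longrightarrow>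
           norm (D (\<pi> r x) - \<pi> r (D x)) \<le> K * norm x"
proof -
  have "\<forall>r\<in>R. \<exists>K>0. \<forall>x. x \<in> Dm \<longrightarrow> \<pi> r x \<in> Dm \<longrightarrow> norm (D (\<pi> r x) - \<pi> r (D x)) \<le> K * norm x"
    using assms(1,3) unfolding spectral_triple_def by (blast intro: bounded_commutator_norm_bound)
  then obtain K where K_pos: "\<And>r. r \<in> R \<Longrightarrow> K r > 0"
    and bound: "\<And>r x. r \<in> R \<Longrightarrow> x \<in> Dm \<Longrightarrow> \<pi> r x \<in> Dm \<Longrightarrow>
                  norm (D (\<pi> r x) - \<pi> r (D x)) \<le> K r * norm x"
    by metis
  have "norm (D (\<pi> r x) - \<pi> r (D x)) \<le> (\<Sum>r\<in>R. K r) * norm x"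
    if "r \<in> R" "x \<in> Dm" "\<pi> r x \<in> Dm" for r x
  proof -
    have "K r \<le> (\<Sum>r\<in>R. K r)"
      using that(1) K_pos \<open>finite R\<close> by (intro member_le_sum) (auto intro: less_imp_le)
    then show ?thesis
      using bound[OF that] by (meson mult_right_mono norm_ge_zero order_trans)
  qed
  moreover have "(\<Sum>r\<in>R. K r) \<ge> 0"
    using K_pos by (simp add: sum_nonneg less_imp_le)
  ultimately show ?thesis by blast
qed

lemma eigenvalue_gap_le_commutator_bound:
  fixes P T :: "'h::real_normed_vector \<Rightarrow> 'h"
  assumes "linear P" and "P u = v" and "v \<noteq> 0"
    and "T u = a *\<^sub>R u" and "T v = b *\<^sub>R v"
    and commutator: "norm (T (P u) - P (T u)) \<le> K * norm u"
    and "K \<ge> 0" and "norm u < c * norm v"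
  shows "\<bar>b - a\<bar> \<le> c * K"
proof -
  have "T (P u) - P (T u) = (b - a) *\<^sub>R v"
    using assms(1-5) by (simp add: linear_scale scaleR_diff_left)
  then have "\<bar>b - a\<bar> * norm v \<le> K * norm u"
    using commutator by simp
  also have "\<dots> \<le> K * (c * norm v)"
    using assms(7,8) by (simp add: mult_left_mono)
  finally show ?thesis
    using \<open>v \<noteq> 0\<close> by (simp add: algebra_simps)
qed

lemma abs_le_along_relpow:
  fixes f :: "'v \<Rightarrow> real"
  assumes edge: "\<And>u w. (u, w) \<in> E \<Longrightarrow> \<bar>f w - f u\<bar> \<le> M"
    and "(v0, v) \<in> E ^^ n"
  shows "\<bar>f v\<bar> \<le> \<bar>f v0\<bar> + M * real n"
  using assms(2)
proof (induction n arbitrary: v)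
  case 0
  then show ?case by simp
next
  case (Suc n)
  then obtain u where "(v0, u) \<in> E ^^ n" "(u, v) \<in> E" by auto
  then have "\<bar>f u\<bar> \<le> \<bar>f v0\<bar> + M * real n" "\<bar>f v - f u\<bar> \<le> M"
    using Suc.IH edge by blast+
  then show ?case by (simp add: algebra_simps)
qed

lemma abs_le_mult_path_length:
  fixes f :: "'v \<Rightarrow> real"
  assumes edge: "\<And>u w. (u, w) \<in> E \<Longrightarrow> \<bar>f w - f u\<bar> \<le> M"
    and "M \<ge> 0" and "is_root V E v0" and "v \<in> V"
  shows "\<bar>f v\<bar> \<le> (\<bar>f v0\<bar> + M) * real (path_length E v0 v)"
proof (cases "v = v0")
  case True
  then show ?thesis using \<open>M \<ge> 0\<close> by (simp add: path_length_def)
next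
  case False
  define l where "l = (LEAST n. (v0, v) \<in> E ^^ n)"
  have "(v0, v) \<in> E\<^sup>*"
    using assms(3,4) unfolding is_root_def by blast
  then have path: "(v0, v) \<in> E ^^ l"
    unfolding l_def by (metis LeastI rtrancl_power)
  with False have "real l \<ge> 1"
    by (cases l) auto
  have "\<bar>f v\<bar> \<le> \<bar>f v0\<bar> + M * real l"
    using abs_le_along_relpow[OF edge path] .
  also have "\<dots> \<le> (\<bar>f v0\<bar> + M) * real l"
    using \<open>real l \<ge> 1\<close> mult_right_mono[of 1 "real l" "\<bar>f v0\<bar>"] by (simp add: algebra_simps)
  finally show ?thesis
    using False by (simp add: path_length_def l_def)
qed

lemma linear_growth_along_root_paths:
  fixes f :: "'v \<Rightarrow> real"
  assumes edge: "\<And>u w. (u, w) \<in> E \<Longrightarrow> \<bar>f w - f u\<bar> \<le> M"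
    and "M \<ge> 0" and root: "is_root V E v0"
  shows "\<exists>C>0. \<forall>v\<in>V. \<bar>f v\<bar> \<le> C * real (path_length E v0 v)"
proof (intro exI[of _ "\<bar>f v0\<bar> + M + 1"] conjI ballI)
  show "0 < \<bar>f v0\<bar> + M + 1"
    using \<open>M \<ge> 0\<close> by simp
  fix v assume "v \<in> V"
  with edge \<open>M \<ge> 0\<close> root have "\<bar>f v\<bar> \<le> (\<bar>f v0\<bar> + M) * real (path_length E v0 v)"
    by (rule abs_le_mult_path_length)
  also have "\<dots> \<le> (\<bar>f v0\<bar> + M + 1) * real (path_length E v0 v)"
    by (simp add: mult_right_mono)
  finally show "\<bar>f v\<bar> \<le> (\<bar>f v0\<bar> + M + 1) * real (path_length E v0 v)" .
qed

lemma growth_edge_eigenvalue_gap: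
  assumes "(\<gamma>, \<gamma>') \<in> growth_edges \<Gamma> N e \<pi> R c"
    and linear: "\<And>r. r \<in> R \<Longrightarrow> linear (\<pi> r)"
    and nonzero: "\<And>\<gamma> i. \<gamma> \<in> \<Gamma> \<Longrightarrow> i \<in> {1..N \<gamma>} \<Longrightarrow> e \<gamma> i \<noteq> 0"
    and dom: "\<And>\<gamma> i. \<gamma> \<in> \<Gamma> \<Longrightarrow> i \<in> {1..N \<gamma>} \<Longrightarrow> e \<gamma> i \<in> Dm"
    and eig: "\<And>\<gamma> i. \<gamma> \<in> \<Gamma> \<Longrightarrow> i \<in> {1..N \<gamma>} \<Longrightarrow> D (e \<gamma> i) = d \<gamma> *\<^sub>R e \<gamma> i"
    and commutator: "\<forall>r\<in>R. \<forall>x. x \<in> Dm \<longrightarrow> \<pi> r x \<in> Dm \<longrightarrow>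
                       norm (D (\<pi> r x) - \<pi> r (D x)) \<le> K * norm x"
    and "K \<ge> 0"
  shows "\<bar>d \<gamma>' - d \<gamma>\<bar> \<le> c * K"
proof -
  obtain r i i' where \<gamma>: "\<gamma> \<in> \<Gamma>" "\<gamma>' \<in> \<Gamma>" and r: "r \<in> R"
    and i: "i \<in> {1..N \<gamma>}" "i' \<in> {1..N \<gamma>'}" and maps: "\<pi> r (e \<gamma> i) = e \<gamma>' i'"
    and ratio: "norm (e \<gamma> i) / norm (e \<gamma>' i') < c"
    using assms(1) unfolding growth_edges_def by blast
  have "e \<gamma>' i' \<noteq> 0"
    using nonzero \<gamma> i by blast
  then have "norm (e \<gamma> i) < c * norm (e \<gamma>' i')"
    using ratio by (simp add: divide_less_eq)
  moreover have "norm (D (\<pi> r (e \<gamma> i)) - \<pi> r (D (e \<gamma> i))) \<le> K * norm (e \<gamma> i)"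
    using commutator r dom \<gamma> i maps by metis
  ultimately show ?thesis
    using \<gamma> i r maps linear eig \<open>K \<ge> 0\<close> \<open>e \<gamma>' i' \<noteq> 0\<close>
    by (intro eigenvalue_gap_le_commutator_bound[where P = "\<pi> r" and T = D]) simp_all
qed

theorem proposition2p3:
  fixes J :: "'h::{real_inner,complete_space} \<Rightarrow> 'h"
    and A :: "'a set" and \<pi> :: "'a \<Rightarrow> 'h \<Rightarrow> 'h"
    and \<Gamma> :: "'g set" and N :: "'g \<Rightarrow> nat" and e :: "'g \<Rightarrow> nat \<Rightarrow> 'h"
    and Dm :: "'h set" and D :: "'h \<Rightarrow> 'h" and d :: "'g \<Rightarrow> real"
    and R :: "'a set" and c :: real and \<gamma>0 :: 'g
  assumes J: "complex_structure J"
    and pi_bounded: "\<forall>a\<in>A. bounded_linear (\<pi> a) \<and> (\<forall>x. \<pi> a (J x) = J (\<pi> a x))"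
    and Gamma_countable: "countable \<Gamma>"
    and N_pos: "\<forall>\<gamma>\<in>\<Gamma>. N \<gamma> \<ge> 1"
    and e_inj: "inj_on (\<lambda>(\<gamma>, i). e \<gamma> i) (SIGMA \<gamma>:\<Gamma>. {1..N \<gamma>})"
    and e_indep: "independent ((\<lambda>(\<gamma>, i). e \<gamma> i) ` (SIGMA \<gamma>:\<Gamma>. {1..N \<gamma>})
                     \<union> (\<lambda>(\<gamma>, i). J (e \<gamma> i)) ` (SIGMA \<gamma>:\<Gamma>. {1..N \<gamma>}))"
    and e_dense: "closure (span ((\<lambda>(\<gamma>, i). e \<gamma> i) ` (SIGMA \<gamma>:\<Gamma>. {1..N \<gamma>})
                     \<union> (\<lambda>(\<gamma>, i). J (e \<gamma> i)) ` (SIGMA \<gamma>:\<Gamma>. {1..N \<gamma>}))) = UNIV"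
    and e_dom: "\<forall>\<gamma>\<in>\<Gamma>. \<forall>i\<in>{1..N \<gamma>}. e \<gamma> i \<in> Dm"
    and D_eig: "\<forall>\<gamma>\<in>\<Gamma>. \<forall>i\<in>{1..N \<gamma>}. D (e \<gamma> i) = d \<gamma> *\<^sub>R e \<gamma> i"
    and triple: "spectral_triple J A \<pi> Dm D"
    and R_fin: "finite R" and R_sub: "R \<subseteq> A"
    and c_pos: "c > 0"
    and root: "is_root \<Gamma> (growth_edges \<Gamma> N e \<pi> R c) \<gamma>0"
  shows "\<exists>C>0. \<forall>\<gamma>\<in>\<Gamma>. \<bar>d \<gamma>\<bar> \<le> C * real (path_length (growth_edges \<Gamma> N e \<pi> R c) \<gamma>0 \<gamma>)"
proof -
  obtain K where "K \<ge> 0" and commutator: "\<forall>r\<in>R. \<forall>x. x \<in> Dm \<longrightarrow> \<pi> r x \<in> Dm \<longrightarrow>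
      norm (D (\<pi> r x) - \<pi> r (D x)) \<le> K * norm x"
    using spectral_triple_uniform_commutator_bound[OF triple R_fin R_sub] by blast
  have linear: "linear (\<pi> r)" if "r \<in> R" for r
    using pi_bounded R_sub that by (blast intro: bounded_linear.linear)
  have nonzero: "e \<gamma> i \<noteq> 0" if "\<gamma> \<in> \<Gamma>" "i \<in> {1..N \<gamma>}" for \<gamma> i
  proof
    assume "e \<gamma> i = 0"
    with that have "0 \<in> (\<lambda>(\<gamma>, i). e \<gamma> i) ` (SIGMA \<gamma>:\<Gamma>. {1..N \<gamma>})"
      by force
    with e_indep show False
      by (metis UnI1 dependent_zero)
  qed
  have "\<bar>d \<gamma>' - d \<gamma>\<bar> \<le> c * K" if "(\<gamma>, \<gamma>') \<in> growth_edges \<Gamma> N e \<pi> R c" for \<gamma> \<gamma>'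
    using that linear nonzero e_dom D_eig commutator \<open>K \<ge> 0\<close>
    by (intro growth_edge_eigenvalue_gap) auto
  moreover have "c * K \<ge> 0"
    using c_pos \<open>K \<ge> 0\<close> by simp
  ultimately show ?thesis
    using root by (rule linear_growth_along_root_paths)
qed

end
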